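(* Let $\Omega\subset\mathbb{R}^d$ be a bounded Lipschitz domain, $g:[0,\infty)\to[0,\infty)$ continuous and strictly increasing with $g(0)=0$, $0<\alpha\le1$, $\delta,M_1,M_2>0$, $C>0$, and $\beta>d$. Then there exists a constant $\tilde\varepsilon>0$ depending only on $\beta,C,d,\Omega,\delta,\alpha,M_1,M_2,g$ such that for all $0<\varepsilon_2<\tilde\varepsilon$ and all $y\in C^{1,\alpha}(\Omega;\mathbb{R}^d)$ with $$\det\nabla y\ge\delta,\quad |\nabla y|\le M_1\ \text{ on }\Omega,\quad \|\nabla y\|_{C^\alpha(\Omega)}\le M_2,$$ the bound $E^{CN}_{\varepsilon_2}(y)\le C$ implies that $y$ is globally injective on $\Omega$.
   Context: For $\varepsilon_2>0$, $E^{CN}_{\varepsilon_2}(y):=\frac{1}{\varepsilon_2^\beta}\int_{\Omega\times\Omega}\frac{1}{\varepsilon_2^d}\big[g(|\tilde x-x|)-g\big(\tfrac{1}{\varepsilon_2}|y(\tilde x)-y(x)|\big)\big]^+\,d(x,\tilde x)$, with $[a]^+=\max\{0,a\}$ and Euclidean norms. *)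

theory Defs
  imports "HOL-Analysis.Analysis"
begin

definition lipschitz_domain :: "(real^'n) set \<Rightarrow> bool" where
  "lipschitz_domain \<Omega> \<longleftrightarrow>
     \<Omega> \<noteq> {} \<and> bounded \<Omega> \<and> open \<Omega> \<and> connected \<Omega> \<and>
     (\<forall>p \<in> frontier \<Omega>. \<exists>e f L r h.
        norm e = 1 \<and> r > 0 \<and> h > 0 \<and> L \<ge> 0 \<and>
        (\<forall>z1 z2. z1 \<bullet> e = 0 \<longrightarrow> z2 \<bullet> e = 0 \<longrightarrow> \<bar>f z1 - f z2\<bar> \<le> L * norm (z1 - z2)) \<and>
        f 0 = 0 \<and>
        (\<forall>x. let t = (x - p) \<bullet> e; z = (x - p) - t *\<^sub>R e in
              norm z < r \<longrightarrow> \<bar>t\<bar> < h \<longrightarrow> (x \<in> \<Omega> \<longleftrightarrow> t < f z)))"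

definition sup_norm_on :: "(real^'n) set \<Rightarrow> (real^'n \<Rightarrow> real^'n^'n) \<Rightarrow> real" where
  "sup_norm_on S F = Sup ((\<lambda>x. norm (F x)) ` S)"

definition holder_quotients :: "real \<Rightarrow> (real^'n) set \<Rightarrow> (real^'n \<Rightarrow> real^'n^'n) \<Rightarrow> real set" where
  "holder_quotients \<alpha> S F =
     {norm (F x - F z) / (dist x z powr \<alpha>) | x z. x \<in> S \<and> z \<in> S \<and> x \<noteq> z}"

definition holder_seminorm :: "real \<Rightarrow> (real^'n) set \<Rightarrow> (real^'n \<Rightarrow> real^'n^'n) \<Rightarrow> real" where
  "holder_seminorm \<alpha> S F = Sup (holder_quotients \<alpha> S F)"

definition holder_norm :: "real \<Rightarrow> (real^'n) set \<Rightarrow> (real^'n \<Rightarrow> real^'n^'n) \<Rightarrow> real" where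
  "holder_norm \<alpha> S F = sup_norm_on S F + holder_seminorm \<alpha> S F"

definition C1alpha :: "real \<Rightarrow> (real^'n) set \<Rightarrow> (real^'n \<Rightarrow> real^'n) \<Rightarrow> (real^'n \<Rightarrow> real^'n^'n) \<Rightarrow> bool" where
  "C1alpha \<alpha> S y Dy \<longleftrightarrow>
     (\<forall>x \<in> S. (y has_derivative (\<lambda>v. Dy x *v v)) (at x)) \<and>
     continuous_on S Dy \<and>
     bdd_above ((\<lambda>x. norm (Dy x)) ` S) \<and>
     bdd_above (holder_quotients \<alpha> S Dy)"

definition E_CN :: "(real \<Rightarrow> real) \<Rightarrow> real \<Rightarrow> (real^'n) set \<Rightarrow> real \<Rightarrow> (real^'n \<Rightarrow> real^'n) \<Rightarrow> ennreal" where
  "E_CN g \<beta> \<Omega> \<epsilon> y =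
     ennreal (1 / \<epsilon> powr \<beta>) *
     (\<integral>\<^sup>+ w. indicator (\<Omega> \<times> \<Omega>) w *
        ennreal ((1 / \<epsilon> ^ CARD('n)) *
          max 0 (g (dist (snd w) (fst w)) - g (dist (y (snd w)) (y (fst w)) / \<epsilon>))) \<partial>lborel)"

end

theory Submission
  imports Defs
begin

(* The bounds on the gradient make an admissible y injective at a fixed small
   scale r: near a Lipschitz boundary any two close points a, b are joined inside Omega by a
   polygon of length at most K |a - b|, along which y - Dy a *v _ varies by at most
   M2 (K |a - b|)^alpha K |a - b|, whereas det Dy >= delta and |Dy| <= M1 give
   |Dy a *v (b - a)| >= c |a - b|.  Hence a collision y a = y b, a ~= b, has |a - b| >= r.
   For such a collision, balls of radius ~ eps inside Omega next to a and b form a set of pairs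
   of measure ~ eps^(2d) on which |x - x'| >= r/2 while |y x - y x'| = O(eps), so the integrand
   of the energy is at least g (r/2) / 2 there.  Thus the energy is at least A eps^(d - beta),
   which exceeds C for small eps because beta > d. *)

section \<open>Matrices with determinant bounded below\<close>

lemma norm_matrix_vector_mult_le:
  fixes A :: "real^'n^'m"
  shows "norm (A *v x) \<le> norm A * norm x"
proof -
  have "(norm (A *v x))\<^sup>2 = (\<Sum>i\<in>UNIV. (A $ i \<bullet> x)\<^sup>2)"
    unfolding power2_norm_eq_inner inner_vec_def matrix_mult_dot by (simp add: power2_eq_square)
  also have "\<dots> \<le> (\<Sum>i\<in>UNIV. (norm (A $ i) * norm x)\<^sup>2)"
    by (intro sum_mono) (metis Cauchy_Schwarz_ineq2 abs_le_square_iff abs_mult abs_norm_cancel)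
  also have "\<dots> = (norm A * norm x)\<^sup>2"
    by (simp add: power_mult_distrib power2_norm_eq_inner inner_vec_def sum_distrib_right flip: power2_eq_square)
  finally show ?thesis
    by (rule power2_le_imp_le) simp
qed

lemma onorm_matrix_vector_mult_le:
  fixes A :: "real^'n^'m"
  shows "onorm ((*v) A) \<le> norm A"
  by (rule onorm_le) (rule norm_matrix_vector_mult_le)

lemma compact_invertible_uniformly_bounded_below:
  fixes S :: "(real^'n^'n) set"
  assumes "compact S" and "\<And>A. A \<in> S \<Longrightarrow> invertible A"
  obtains c where "c > 0" and "\<And>A v. A \<in> S \<Longrightarrow> c * norm v \<le> norm (A *v v)"
proof (cases "S = {}")
  case True
  then show ?thesis by (intro that[of 1]) auto
next
  case False
  define P where "P = S \<times> sphere (0::real^'n) 1"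
  have "compact P"
    unfolding P_def using assms(1) by (intro compact_Times) auto
  moreover have "P \<noteq> {}"
    unfolding P_def using False by simp
  moreover have "continuous_on P (\<lambda>w. norm (fst w *v snd w))"
    unfolding matrix_vector_mult_def by (intro continuous_intros continuous_on_vec_lambda)
  ultimately have "\<exists>w\<in>P. \<forall>u\<in>P. norm (fst w *v snd w) \<le> norm (fst u *v snd u)"
    by (rule continuous_attains_inf)
  then obtain w where "w \<in> P"
    and w_min: "\<And>u. u \<in> P \<Longrightarrow> norm (fst w *v snd w) \<le> norm (fst u *v snd u)"
    by blast
  then have "invertible (fst w)" "snd w \<noteq> 0"
    using assms(2) unfolding P_def by auto
  then have "fst w *v snd w \<noteq> 0"
    by (metis invertible_def matrix_left_invertible_ker)
  then have pos: "norm (fst w *v snd w) > 0" by simp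
  have "norm (fst w *v snd w) * norm v \<le> norm (A *v v)" if "A \<in> S" for A v
  proof (cases "v = 0")
    case False
    then have "norm (fst w *v snd w) \<le> norm (A *v (v /\<^sub>R norm v))"
      using w_min[of "(A, v /\<^sub>R norm v)"] that unfolding P_def by simp
    also have "\<dots> = norm (A *v v) / norm v"
      by (simp add: matrix_vector_mult_scaleR divide_inverse_commute)
    finally show ?thesis using False by (simp add: pos_le_divide_eq)
  qed simp
  with pos that show ?thesis by blast
qed

lemma compact_det_ge_norm_le:
  "compact {A :: real^'n^'n. \<delta> \<le> det A \<and> norm A \<le> M}"
proof -
  have "continuous_on UNIV (det :: real^'n^'n \<Rightarrow> real)"
    unfolding det_def by (intro continuous_intros)
  then have "closed {A :: real^'n^'n. \<delta> \<le> det A}"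
    by (intro closed_Collect_le continuous_intros) (auto simp: continuous_on_subset)
  then have "compact ({A :: real^'n^'n. \<delta> \<le> det A} \<inter> cball 0 M)"
    by (simp add: closed_Int_compact)
  moreover have "{A. \<delta> \<le> det A \<and> norm A \<le> M} = {A :: real^'n^'n. \<delta> \<le> det A} \<inter> cball 0 M"
    by auto
  ultimately show ?thesis by simp
qed

lemma det_ge_norm_le_bounded_below:
  fixes \<delta> M :: real
  assumes "\<delta> > 0"
  obtains c where "c > 0"
    and "\<And>(A :: real^'n^'n) v. \<delta> \<le> det A \<Longrightarrow> norm A \<le> M \<Longrightarrow> c * norm v \<le> norm (A *v v)"
proof -
  obtain c where "c > 0"
    and "\<And>(A :: real^'n^'n) v. A \<in> {A. \<delta> \<le> det A \<and> norm A \<le> M} \<Longrightarrow> c * norm v \<le> norm (A *v v)"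
    by (rule compact_invertible_uniformly_bounded_below[OF compact_det_ge_norm_le])
      (use assms in \<open>auto simp: invertible_det_nz\<close>)
  then show ?thesis
    using that by simp
qed

section \<open>Short polygonal paths and interior balls\<close>

definition short_path_in :: "'a::real_normed_vector set \<Rightarrow> real \<Rightarrow> 'a \<Rightarrow> 'a \<Rightarrow> bool" where
  "short_path_in S K a b \<longleftrightarrow>
     (\<exists>p1 p2. closed_segment a p1 \<subseteq> S \<and> closed_segment p1 p2 \<subseteq> S \<and> closed_segment p2 b \<subseteq> S \<and>
       dist a p1 + dist p1 p2 + dist p2 b \<le> K * dist a b)"

definition nearby_ball_in :: "'a::real_normed_vector set \<Rightarrow> real \<Rightarrow> 'a \<Rightarrow> real \<Rightarrow> bool" where
  "nearby_ball_in S \<kappa> a \<rho> \<longleftrightarrow> (\<exists>c. closed_segment a c \<subseteq> S \<and> dist a c \<le> \<rho> \<and> ball c (\<kappa> * \<rho>) \<subseteq> S)"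

lemma short_path_in_mono:
  assumes "short_path_in S K a b" and "K \<le> K'"
  shows "short_path_in S K' a b"
proof -
  have "K * dist a b \<le> K' * dist a b"
    using assms(2) by (rule mult_right_mono) simp
  then show ?thesis
    using assms(1) unfolding short_path_in_def by (meson order_trans)
qed

lemma short_path_in_segment:
  assumes "closed_segment a b \<subseteq> S" and "1 \<le> K"
  shows "short_path_in S K a b"
proof -
  have "dist a b \<le> K * dist a b"
    using mult_right_mono[OF assms(2) zero_le_dist] by simp
  then show ?thesis
    using assms(1) unfolding short_path_in_def by (intro exI[of _ a] exI[of _ b]) auto
qed

lemma short_path_in_cball:
  assumes "short_path_in S K a b"
  shows "short_path_in (S \<inter> cball a (K * dist a b)) K a b"
proof -
  obtain p1 p2 where seg: "closed_segment a p1 \<subseteq> S" "closed_segment p1 p2 \<subseteq> S" "closed_segment p2 b \<subseteq> S"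
    and len: "dist a p1 + dist p1 p2 + dist p2 b \<le> K * dist a b"
    using assms unfolding short_path_in_def by blast
  let ?B = "cball a (K * dist a b)"
  have "dist a p1 \<le> K * dist a b" "dist a p2 \<le> K * dist a b" "dist a b \<le> K * dist a b"
    using len dist_triangle[of a p2 p1] dist_triangle[of a b p2] zero_le_dist[of p1 p2] zero_le_dist[of p2 b]
    by linarith+
  then have "a \<in> ?B" "p1 \<in> ?B" "p2 \<in> ?B" "b \<in> ?B"
    using zero_le_dist[of a p1] by (auto simp del: zero_le_dist)
  then have "closed_segment a p1 \<subseteq> ?B" "closed_segment p1 p2 \<subseteq> ?B" "closed_segment p2 b \<subseteq> ?B"
    by (simp_all add: closed_segment_subset)
  with seg len show ?thesis
    unfolding short_path_in_def by (intro exI[of _ p1] exI[of _ p2]) simp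
qed

lemma short_path_in_bound:
  assumes "short_path_in S K a b" and "0 \<le> B"
    and seg_bound: "\<And>u v. closed_segment u v \<subseteq> S \<Longrightarrow> norm (f u - f v) \<le> B * dist u v"
  shows "norm (f a - f b) \<le> B * K * dist a b"
proof -
  obtain p1 p2 where seg: "closed_segment a p1 \<subseteq> S" "closed_segment p1 p2 \<subseteq> S" "closed_segment p2 b \<subseteq> S"
    and len: "dist a p1 + dist p1 p2 + dist p2 b \<le> K * dist a b"
    using assms(1) unfolding short_path_in_def by blast
  have "norm (f a - f b) = norm ((f a - f p1) + (f p1 - f p2) + (f p2 - f b))"
    by simp
  also have "\<dots> \<le> norm (f a - f p1) + norm (f p1 - f p2) + norm (f p2 - f b)"
    by (intro norm_triangle_le add_right_mono norm_triangle_ineq)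
  also have "\<dots> \<le> B * (dist a p1 + dist p1 p2 + dist p2 b)"
    using seg_bound[OF seg(1)] seg_bound[OF seg(2)] seg_bound[OF seg(3)] by (simp add: algebra_simps)
  also have "\<dots> \<le> B * (K * dist a b)"
    using len assms(2) by (rule mult_left_mono)
  finally show ?thesis by (simp add: mult.assoc)
qed

lemma nearby_ball_in_mono:
  assumes "nearby_ball_in S \<kappa> a \<rho>" and "\<kappa>' \<le> \<kappa>" and "0 \<le> \<rho>"
  shows "nearby_ball_in S \<kappa>' a \<rho>"
proof -
  have "ball c (\<kappa>' * \<rho>) \<subseteq> ball c (\<kappa> * \<rho>)" for c
    using assms(2,3) by (intro subset_ball mult_right_mono)
  then show ?thesis
    using assms(1) unfolding nearby_ball_in_def by blast
qed

lemma nearby_ball_in_center: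
  assumes "ball a \<rho> \<subseteq> S" and "0 < \<rho>" and "\<kappa> \<le> 1"
  shows "nearby_ball_in S \<kappa> a \<rho>"
  unfolding nearby_ball_in_def
proof (intro exI conjI)
  show "closed_segment a a \<subseteq> S" using assms(1,2) by auto
  have "\<kappa> * \<rho> \<le> \<rho>"
    using assms(2,3) by (simp add: mult_left_le_one_le)
  then show "ball a (\<kappa> * \<rho>) \<subseteq> S"
    using assms(1) subset_ball by blast
qed (use assms in auto)

section \<open>Geometry below a Lipschitz graph\<close>

locale lipschitz_graph_chart =
  fixes \<Omega> :: "'a::real_inner set" and p e :: 'a and f :: "'a \<Rightarrow> real" and L r h :: real
  assumes unit: "norm e = 1" and r_pos: "0 < r" and h_pos: "0 < h" and L_nonneg: "0 \<le> L"
    and f_lipschitz: "\<And>z1 z2. z1 \<bullet> e = 0 \<Longrightarrow> z2 \<bullet> e = 0 \<Longrightarrow> \<bar>f z1 - f z2\<bar> \<le> L * norm (z1 - z2)"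
    and below_graph: "\<And>x. let t = (x - p) \<bullet> e; z = (x - p) - t *\<^sub>R e in
                        norm z < r \<longrightarrow> \<bar>t\<bar> < h \<longrightarrow> (x \<in> \<Omega> \<longleftrightarrow> t < f z)"
begin

definition height :: "'a \<Rightarrow> real" where
  "height x = (x - p) \<bullet> e"

definition base :: "'a \<Rightarrow> 'a" where
  "base x = (x - p) - height x *\<^sub>R e"

(* Small enough that the paths and balls built below stay inside the chart cylinder. *)
definition radius :: real where
  "radius = min (r / 2) (h / (2 * L + 4))"

lemma mem_iff_below_graph:
  assumes "norm (base x) < r" and "\<bar>height x\<bar> < h"
  shows "x \<in> \<Omega> \<longleftrightarrow> height x < f (base x)"
  using below_graph[of x] assms unfolding base_def height_def Let_def by blast

lemma inner_e_e: "e \<bullet> e = 1"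
  using unit by (simp add: norm_eq_1)

lemma height_diff: "height u - height v = (u - v) \<bullet> e"
  unfolding height_def by (simp add: inner_diff_left)

lemma base_diff: "base u - base v = (u - v) - ((u - v) \<bullet> e) *\<^sub>R e"
  unfolding base_def height_diff[symmetric] by (simp add: algebra_simps)

lemma base_orthogonal: "base x \<bullet> e = 0"
  unfolding base_def height_def using inner_e_e by (simp add: inner_diff_left)

lemma height_p [simp]: "height p = 0" and base_p [simp]: "base p = 0"
  unfolding base_def height_def by simp_all

lemma abs_height_diff_le: "\<bar>height u - height v\<bar> \<le> dist u v"
  unfolding height_diff dist_norm using Cauchy_Schwarz_ineq2[of "u - v" e] unit by simp

lemma norm_base_diff_le: "norm (base u - base v) \<le> dist u v"
proof -
  have decomp: "u - v = (base u - base v) + ((u - v) \<bullet> e) *\<^sub>R e"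
    unfolding base_diff by simp
  have "orthogonal (base u - base v) (((u - v) \<bullet> e) *\<^sub>R e)"
    unfolding orthogonal_def by (simp add: inner_diff_left base_orthogonal)
  from norm_add_Pythagorean[OF this]
  have "(norm (u - v))\<^sup>2 = (norm (base u - base v))\<^sup>2 + (norm (((u - v) \<bullet> e) *\<^sub>R e))\<^sup>2"
    by (simp only: decomp[symmetric])
  then have "(norm (base u - base v))\<^sup>2 \<le> (norm (u - v))\<^sup>2"
    by simp
  then show ?thesis
    unfolding dist_norm by (rule power2_le_imp_le) simp
qed

lemma f_base_diff_le: "\<bar>f (base u) - f (base v)\<bar> \<le> L * norm (base u - base v)"
  using f_lipschitz[OF base_orthogonal base_orthogonal] .

lemma height_combination: "height ((1 - s) *\<^sub>R x + s *\<^sub>R y) = (1 - s) * height x + s * height y"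
  unfolding height_def by (simp add: algebra_simps inner_add_left inner_diff_left)

lemma base_combination: "base ((1 - s) *\<^sub>R x + s *\<^sub>R y) = (1 - s) *\<^sub>R base x + s *\<^sub>R base y"
  unfolding base_def height_combination by (simp add: algebra_simps)

lemma height_shift [simp]: "height (x - c *\<^sub>R e) = height x - c"
  unfolding height_def using inner_e_e by (simp add: inner_diff_left algebra_simps)

lemma base_shift [simp]: "base (x - c *\<^sub>R e) = base x"
  unfolding base_def by (simp add: algebra_simps)

lemma radius_pos: "0 < radius"
  unfolding radius_def using r_pos h_pos L_nonneg by simp

lemma radius_le: "2 * radius \<le> r" "(2 * L + 4) * radius \<le> h" "4 * radius \<le> h"
proof -
  have "radius \<le> r / 2" "radius \<le> h / (2 * L + 4)"
    unfolding radius_def by (rule min.cobounded1, rule min.cobounded2)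
  then show "2 * radius \<le> r" and *: "(2 * L + 4) * radius \<le> h"
    using L_nonneg by (simp_all add: pos_le_divide_eq mult.commute del: times_divide_eq_right)
  have "4 * radius \<le> (2 * L + 4) * radius"
    using L_nonneg radius_pos by (intro mult_right_mono) auto
  with * show "4 * radius \<le> h"
    by linarith
qed

lemma near_p_in_chart:
  assumes "dist x p < 2 * radius"
  shows "norm (base x) < r" and "\<bar>height x\<bar> < h"
  using norm_base_diff_le[of x p] abs_height_diff_le[of x p] assms radius_le by simp_all

lemma below_graph_near_p:
  assumes "a \<in> \<Omega>" and "dist a p < radius"
  shows "height a < f (base a)"
proof -
  have "dist a p < 2 * radius"
    using assms(2) radius_pos by linarith
  then show ?thesis
    using mem_iff_below_graph near_p_in_chart assms(1) by blast
qed

lemma downward_segment_subset: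
  assumes "a \<in> \<Omega>" and "dist a p < radius" and "0 \<le> c" and "- h < height a - c"
  shows "closed_segment a (a - c *\<^sub>R e) \<subseteq> \<Omega>"
proof
  fix u assume "u \<in> closed_segment a (a - c *\<^sub>R e)"
  then obtain s where s: "0 \<le> s" "s \<le> 1" and u: "u = a - (s * c) *\<^sub>R e"
    unfolding closed_segment_def by (auto simp: algebra_simps)
  have "dist a p < 2 * radius"
    using assms(2) radius_pos by linarith
  then have "norm (base a) < r" "\<bar>height a\<bar> < h"
    by (rule near_p_in_chart)+
  moreover have "base u = base a" "height u = height a - s * c"
    unfolding u by simp_all
  moreover have "s * c \<le> c" "0 \<le> s * c"
    using s assms(3) by (auto simp: mult_left_le_one_le)
  ultimately have "norm (base u) < r" "\<bar>height u\<bar> < h" "height u < f (base u)"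
    using below_graph_near_p[OF assms(1,2)] assms(4) by auto
  then show "u \<in> \<Omega>"
    using mem_iff_below_graph by blast
qed

lemma level_segment_subset:
  assumes a: "a \<in> \<Omega>" "dist a p < radius" and b: "dist b p < radius"
    and m: "- h < m" "m \<le> height a - L * norm (base a - base b)"
  shows "closed_segment (a - (height a - m) *\<^sub>R e) (b - (height b - m) *\<^sub>R e) \<subseteq> \<Omega>"
proof
  fix u assume "u \<in> closed_segment (a - (height a - m) *\<^sub>R e) (b - (height b - m) *\<^sub>R e)"
  then obtain s where s: "0 \<le> s" "s \<le> 1"
    and u: "u = (1 - s) *\<^sub>R (a - (height a - m) *\<^sub>R e) + s *\<^sub>R (b - (height b - m) *\<^sub>R e)"
    unfolding closed_segment_def by blast
  have height_u: "height u = m"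
    unfolding u height_combination height_shift by (simp add: algebra_simps)
  have base_u: "base u = (1 - s) *\<^sub>R base a + s *\<^sub>R base b"
    unfolding u base_combination base_shift ..
  have "norm (base a) < radius" "norm (base b) < radius"
    using norm_base_diff_le[of a p] norm_base_diff_le[of b p] a(2) b by simp_all
  then have "closed_segment (base a) (base b) \<subseteq> ball 0 radius"
    by (intro closed_segment_subset convex_ball) auto
  moreover have "base u \<in> closed_segment (base a) (base b)"
    unfolding base_u closed_segment_def using s by blast
  ultimately have "base u \<in> ball 0 radius"
    by blast
  then have "norm (base u) < r"
    using radius_le(1) radius_pos by simp
  moreover have "\<bar>height u\<bar> < h"
  proof -
    have "0 \<le> L * norm (base a - base b)"
      using L_nonneg by simp
    then show ?thesis
      using m abs_height_diff_le[of a p] a(2) radius_le(3) radius_pos unfolding height_u by simp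
  qed
  moreover have "height u < f (base u)"
  proof -
    have "norm (base u - base a) = s * norm (base a - base b)"
      unfolding base_u using s(1) by (simp add: algebra_simps norm_minus_commute flip: scaleR_diff_right)
    also have "\<dots> \<le> norm (base a - base b)"
      using s by (simp add: mult_left_le_one_le)
    finally have "L * norm (base u - base a) \<le> L * norm (base a - base b)"
      using L_nonneg by (intro mult_left_mono)
    then have "f (base a) - L * norm (base a - base b) \<le> f (base u)"
      using f_base_diff_le[of u a] by linarith
    then show ?thesis
      using below_graph_near_p[OF a] m(2) height_u by linarith
  qed
  ultimately show "u \<in> \<Omega>"
    using mem_iff_below_graph by blast
qed

lemma level_path_length:
  assumes "m \<le> height a" and "m \<le> height b"
  shows "dist a (a - (height a - m) *\<^sub>R e) + dist (a - (height a - m) *\<^sub>R e) (b - (height b - m) *\<^sub>R e)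
      + dist (b - (height b - m) *\<^sub>R e) b = height a + height b - 2 * m + norm (base a - base b)"
proof -
  have "(a - (height a - m) *\<^sub>R e) - (b - (height b - m) *\<^sub>R e) = base a - base b"
    unfolding base_def by (simp add: algebra_simps)
  then show ?thesis
    using assms by (simp add: dist_norm unit norm_minus_commute)
qed

(* Go down to a common height m, across, and up again; m lies below both points by the
   Lipschitz slack L |base a - base b|, which keeps the level segment below the graph. *)
lemma short_path_near_p:
  assumes a: "a \<in> \<Omega>" "dist a p < radius" and b: "b \<in> \<Omega>" "dist b p < radius"
  shows "short_path_in \<Omega> (2 * L + 2) a b"
proof -
  define m where "m = min (height a) (height b) - L * norm (base a - base b)"
  define p1 where "p1 = a - (height a - m) *\<^sub>R e"
  define p2 where "p2 = b - (height b - m) *\<^sub>R e"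
  have "norm (base a - base b) < 2 * radius"
    using norm_base_diff_le[of a b] a(2) b(2) dist_triangle2[of a b p] by linarith
  then have "L * norm (base a - base b) \<le> L * (2 * radius)"
    using L_nonneg by (intro mult_left_mono) auto
  moreover have "\<bar>height a\<bar> < radius" "\<bar>height b\<bar> < radius"
    using abs_height_diff_le[of a p] abs_height_diff_le[of b p] a(2) b(2) by simp_all
  moreover have "0 \<le> L * norm (base a - base b)"
    using L_nonneg by simp
  ultimately have m: "- h < m" "m \<le> height a - L * norm (base a - base b)"
    "m \<le> height b - L * norm (base b - base a)" "m \<le> height a" "m \<le> height b"
    using radius_le(2) unfolding m_def by (auto simp: algebra_simps norm_minus_commute)
  have "closed_segment a p1 \<subseteq> \<Omega>"
    unfolding p1_def by (rule downward_segment_subset[OF a]) (use m(1,4) in auto)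
  moreover have "closed_segment p1 p2 \<subseteq> \<Omega>"
    unfolding p1_def p2_def by (rule level_segment_subset[OF a b(2) m(1,2)])
  moreover have "closed_segment p2 b \<subseteq> \<Omega>"
    using downward_segment_subset[OF b, of "height b - m"] m(1,5) unfolding p2_def
    by (simp add: closed_segment_commute)
  ultimately have segments: "closed_segment a p1 \<subseteq> \<Omega>" "closed_segment p1 p2 \<subseteq> \<Omega>" "closed_segment p2 b \<subseteq> \<Omega>"
    by blast+
  have "dist a p1 + dist p1 p2 + dist p2 b = height a + height b - 2 * m + norm (base a - base b)"
    unfolding p1_def p2_def by (rule level_path_length[OF m(4,5)])
  also have "\<dots> = \<bar>height a - height b\<bar> + (2 * L + 1) * norm (base a - base b)"
    unfolding m_def by (simp add: min_def algebra_simps)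
  also have "\<dots> \<le> dist a b + (2 * L + 1) * dist a b"
    using abs_height_diff_le[of a b] norm_base_diff_le[of a b] L_nonneg
    by (intro add_mono mult_left_mono) auto
  finally have "dist a p1 + dist p1 p2 + dist p2 b \<le> (2 * L + 2) * dist a b"
    by (simp add: algebra_simps)
  with segments show ?thesis
    unfolding short_path_in_def by blast
qed

lemma ball_below_near_p:
  assumes a: "a \<in> \<Omega>" "dist a p < radius" and \<rho>: "0 < \<rho>" "\<rho> \<le> radius"
  shows "ball (a - (\<rho> / 2) *\<^sub>R e) (\<rho> / (2 * L + 2)) \<subseteq> \<Omega>"
proof
  define r1 where "r1 = \<rho> / (2 * L + 2)"
  have "0 < r1" "(L + 1) * r1 = \<rho> / 2"
    unfolding r1_def using \<rho> L_nonneg by (auto simp: field_simps)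
  then have r1: "0 < r1" "r1 \<le> (L + 1) * r1" "(L + 1) * r1 = \<rho> / 2" "(L + 1) * r1 = L * r1 + r1"
    using L_nonneg by (simp_all add: algebra_simps)
  fix u assume "u \<in> ball (a - (\<rho> / 2) *\<^sub>R e) (\<rho> / (2 * L + 2))"
  then have "\<bar>height u - (height a - \<rho> / 2)\<bar> < r1" "norm (base u - base a) < r1"
    using abs_height_diff_le[of u "a - (\<rho> / 2) *\<^sub>R e"] norm_base_diff_le[of u "a - (\<rho> / 2) *\<^sub>R e"]
    unfolding r1_def by (auto simp: dist_commute)
  moreover have "\<bar>height a\<bar> < radius" "norm (base a) < radius"
    using abs_height_diff_le[of a p] norm_base_diff_le[of a p] a(2) by simp_all
  moreover have "L * norm (base u - base a) \<le> L * r1"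
    using L_nonneg \<open>norm (base u - base a) < r1\<close> by (simp add: mult_left_mono)
  ultimately have "height u < f (base u)" "norm (base u) < r" "\<bar>height u\<bar> < h"
    using f_base_diff_le[of u a] below_graph_near_p[OF a] norm_triangle_ineq2[of "base u" "base a"]
      r1 \<rho> radius_le radius_pos by linarith+
  then show "u \<in> \<Omega>"
    using mem_iff_below_graph by blast
qed

lemma nearby_ball_near_p:
  assumes a: "a \<in> \<Omega>" "dist a p < radius" and \<rho>: "0 < \<rho>" "\<rho> \<le> radius"
  shows "nearby_ball_in \<Omega> (1 / (2 * L + 2)) a \<rho>"
  unfolding nearby_ball_in_def
proof (intro exI conjI)
  have "\<bar>height a\<bar> < radius"
    using abs_height_diff_le[of a p] a(2) by simp
  then show "closed_segment a (a - (\<rho> / 2) *\<^sub>R e) \<subseteq> \<Omega>"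
    using \<rho> radius_le(3) by (intro downward_segment_subset a) auto
  show "dist a (a - (\<rho> / 2) *\<^sub>R e) \<le> \<rho>"
    using \<rho> by (simp add: dist_norm unit)
  show "ball (a - (\<rho> / 2) *\<^sub>R e) (1 / (2 * L + 2) * \<rho>) \<subseteq> \<Omega>"
    using ball_below_near_p[OF a \<rho>] by simp
qed

end

section \<open>Uniform geometry of Lipschitz domains\<close>

lemma open_local_geometry:
  fixes \<Omega> :: "'a::real_normed_vector set"
  assumes "open \<Omega>" and "q \<in> \<Omega>"
  obtains \<eta> where "0 < \<eta>" and "\<forall>a\<in>ball q \<eta>. \<forall>b\<in>ball q \<eta>. short_path_in \<Omega> 1 a b"
    and "\<forall>a\<in>ball q \<eta>. \<forall>\<rho>. 0 < \<rho> \<and> \<rho> \<le> \<eta> \<longrightarrow> nearby_ball_in \<Omega> 1 a \<rho>"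
proof -
  obtain \<eta> where "0 < \<eta>" and sub: "ball q (2 * \<eta>) \<subseteq> \<Omega>"
    using assms by (metis open_contains_ball_eq field_sum_of_halves half_gt_zero mult_2)
  have "ball a \<rho> \<subseteq> ball q (2 * \<eta>)" if "a \<in> ball q \<eta>" "\<rho> \<le> \<eta>" for a \<rho>
  proof
    fix x assume "x \<in> ball a \<rho>"
    then show "x \<in> ball q (2 * \<eta>)"
      using that dist_triangle[of q x a] by simp
  qed
  then have "nearby_ball_in \<Omega> 1 a \<rho>" if "a \<in> ball q \<eta>" "0 < \<rho>" "\<rho> \<le> \<eta>" for a \<rho>
    using sub that by (intro nearby_ball_in_center) auto
  moreover have "closed_segment a b \<subseteq> ball q (2 * \<eta>)" if "a \<in> ball q \<eta>" "b \<in> ball q \<eta>" for a b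
    using that \<open>0 < \<eta>\<close> by (intro closed_segment_subset convex_ball) auto
  then have "short_path_in \<Omega> 1 a b" if "a \<in> ball q \<eta>" "b \<in> ball q \<eta>" for a b
    using sub that by (intro short_path_in_segment) auto
  ultimately show ?thesis
    using that \<open>0 < \<eta>\<close> by blast
qed

lemma lipschitz_domain_local_geometry:
  fixes \<Omega> :: "(real^'n) set"
  assumes "lipschitz_domain \<Omega>" and "q \<in> closure \<Omega>"
  shows "\<exists>\<eta> K \<kappa>. 0 < \<eta> \<and> 1 \<le> K \<and> 0 < \<kappa> \<and> \<kappa> \<le> 1 \<and>
           (\<forall>a\<in>\<Omega> \<inter> ball q \<eta>. \<forall>b\<in>\<Omega> \<inter> ball q \<eta>. short_path_in \<Omega> K a b) \<and>
           (\<forall>a\<in>\<Omega> \<inter> ball q \<eta>. \<forall>\<rho>. 0 < \<rho> \<and> \<rho> \<le> \<eta> \<longrightarrow> nearby_ball_in \<Omega> \<kappa> a \<rho>)"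
proof -
  have "open \<Omega>"
    using assms(1) unfolding lipschitz_domain_def by blast
  show ?thesis
  proof (cases "q \<in> \<Omega>")
    case True
    obtain \<eta> where "0 < \<eta>" and "\<forall>a\<in>ball q \<eta>. \<forall>b\<in>ball q \<eta>. short_path_in \<Omega> 1 a b"
      and "\<forall>a\<in>ball q \<eta>. \<forall>\<rho>. 0 < \<rho> \<and> \<rho> \<le> \<eta> \<longrightarrow> nearby_ball_in \<Omega> 1 a \<rho>"
      by (rule open_local_geometry[OF \<open>open \<Omega>\<close> True]) (rule that)
    then show ?thesis
      by (intro exI[of _ \<eta>] exI[of _ 1]) auto
  next
    case False
    with \<open>open \<Omega>\<close> assms(2) have "q \<in> frontier \<Omega>"
      by (simp add: frontier_def interior_open)
    then obtain e f L r h where "norm e = 1" "0 < r" "0 < h" "0 \<le> L"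
      "\<forall>z1 z2. z1 \<bullet> e = 0 \<longrightarrow> z2 \<bullet> e = 0 \<longrightarrow> \<bar>f z1 - f z2\<bar> \<le> L * norm (z1 - z2)"
      "\<forall>x. let t = (x - q) \<bullet> e; z = (x - q) - t *\<^sub>R e in
            norm z < r \<longrightarrow> \<bar>t\<bar> < h \<longrightarrow> (x \<in> \<Omega> \<longleftrightarrow> t < f z)"
      using assms(1) unfolding lipschitz_domain_def by blast
    then interpret lipschitz_graph_chart \<Omega> q e f L r h
      by unfold_locales blast+
    show ?thesis
    proof (intro exI conjI)
      show "0 < radius" "1 \<le> 2 * L + 2" "0 < 1 / (2 * L + 2)" "1 / (2 * L + 2) \<le> 1"
        using radius_pos L_nonneg by simp_all
      show "\<forall>a\<in>\<Omega> \<inter> ball q radius. \<forall>b\<in>\<Omega> \<inter> ball q radius. short_path_in \<Omega> (2 * L + 2) a b"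
        by (simp add: short_path_near_p dist_commute)
      show "\<forall>a\<in>\<Omega> \<inter> ball q radius. \<forall>\<rho>. 0 < \<rho> \<and> \<rho> \<le> radius \<longrightarrow>
          nearby_ball_in \<Omega> (1 / (2 * L + 2)) a \<rho>"
        by (simp add: nearby_ball_near_p dist_commute)
    qed
  qed
qed

lemma compact_uniform_ball_refinement:
  fixes S :: "'a::metric_space set"
  assumes "compact S" and "\<forall>q\<in>S. 0 < \<eta> q"
  obtains F \<epsilon> where "F \<subseteq> S" "finite F" "0 < \<epsilon>" "\<And>x. x \<in> S \<Longrightarrow> \<exists>q\<in>F. ball x \<epsilon> \<subseteq> ball q (\<eta> q)"
proof -
  have "S \<subseteq> (\<Union>q\<in>S. ball q (\<eta> q))"
    using assms(2) by force
  then obtain F where F: "F \<subseteq> S" "finite F" "S \<subseteq> (\<Union>q\<in>F. ball q (\<eta> q))"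
    by (rule compactE_image[OF assms(1), rotated]) auto
  obtain \<epsilon> where "0 < \<epsilon>" and "\<And>x. x \<in> S \<Longrightarrow> \<exists>G\<in>(\<lambda>q. ball q (\<eta> q)) ` F. ball x \<epsilon> \<subseteq> G"
    using Heine_Borel_lemma[OF assms(1) F(3)] by auto
  then show ?thesis
    using that[OF F(1,2) \<open>0 < \<epsilon>\<close>] by blast
qed

lemma lipschitz_domain_uniform_geometry:
  fixes \<Omega> :: "(real^'n) set"
  assumes "lipschitz_domain \<Omega>"
  obtains R K \<kappa> where "0 < R" "1 \<le> K" "0 < \<kappa>" "\<kappa> \<le> 1"
    and "\<forall>a\<in>\<Omega>. \<forall>b\<in>\<Omega>. dist a b < R \<longrightarrow> short_path_in \<Omega> K a b"
    and "\<forall>a\<in>\<Omega>. \<forall>\<rho>. 0 < \<rho> \<and> \<rho> \<le> R \<longrightarrow> nearby_ball_in \<Omega> \<kappa> a \<rho>"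
proof -
  obtain \<eta> K \<kappa> where local: "\<And>q. q \<in> closure \<Omega> \<Longrightarrow> 0 < \<eta> q \<and> 1 \<le> K q \<and> 0 < \<kappa> q \<and> \<kappa> q \<le> 1 \<and>
           (\<forall>a\<in>\<Omega> \<inter> ball q (\<eta> q). \<forall>b\<in>\<Omega> \<inter> ball q (\<eta> q). short_path_in \<Omega> (K q) a b) \<and>
           (\<forall>a\<in>\<Omega> \<inter> ball q (\<eta> q). \<forall>\<rho>. 0 < \<rho> \<and> \<rho> \<le> \<eta> q \<longrightarrow> nearby_ball_in \<Omega> (\<kappa> q) a \<rho>)"
    using lipschitz_domain_local_geometry[OF assms] by metis
  have local_paths: "short_path_in \<Omega> (K q) a b"
    if "q \<in> closure \<Omega>" "a \<in> \<Omega> \<inter> ball q (\<eta> q)" "b \<in> \<Omega> \<inter> ball q (\<eta> q)" for q a b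
    using local[OF that(1)] that(2,3) by blast
  have local_balls: "nearby_ball_in \<Omega> (\<kappa> q) a \<rho>"
    if "q \<in> closure \<Omega>" "a \<in> \<Omega> \<inter> ball q (\<eta> q)" "0 < \<rho>" "\<rho> \<le> \<eta> q" for q a \<rho>
    using local[OF that(1)] that(2-4) by blast
  have compact: "compact (closure \<Omega>)"
    using assms unfolding lipschitz_domain_def by (simp add: compact_closure)
  have "\<forall>q\<in>closure \<Omega>. 0 < \<eta> q"
    using local by simp
  then obtain F \<epsilon> where F: "F \<subseteq> closure \<Omega>" "finite F" and "0 < \<epsilon>"
    and lebesgue: "\<And>x. x \<in> closure \<Omega> \<Longrightarrow> \<exists>q\<in>F. ball x \<epsilon> \<subseteq> ball q (\<eta> q)"
    by (rule compact_uniform_ball_refinement[OF compact]) (rule that)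
  define R where "R = Min (insert \<epsilon> (\<eta> ` F))"
  define K0 where "K0 = Max (insert 1 (K ` F))"
  define \<kappa>0 where "\<kappa>0 = Min (insert 1 (\<kappa> ` F))"
  have "0 < R" "1 \<le> K0" "0 < \<kappa>0" "\<kappa>0 \<le> 1"
    using F local \<open>0 < \<epsilon>\<close> unfolding R_def K0_def \<kappa>0_def by (auto simp: subset_eq)
  have bounds: "R \<le> \<epsilon>" "R \<le> \<eta> q" "K q \<le> K0" "\<kappa>0 \<le> \<kappa> q" if "q \<in> F" for q
    using F(2) that unfolding R_def K0_def \<kappa>0_def by auto
  have cover: "\<exists>q\<in>F. a \<in> \<Omega> \<inter> ball q (\<eta> q) \<and> ball a R \<subseteq> ball q (\<eta> q)" if "a \<in> \<Omega>" for a
  proof -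
    have "a \<in> closure \<Omega>"
      using that closure_subset by blast
    then obtain q where "q \<in> F" and sub: "ball a \<epsilon> \<subseteq> ball q (\<eta> q)"
      using lebesgue by blast
    have "ball a R \<subseteq> ball a \<epsilon>"
      using bounds(1)[OF \<open>q \<in> F\<close>] by (rule subset_ball)
    moreover have "a \<in> ball q (\<eta> q)"
      using sub \<open>0 < \<epsilon>\<close> centre_in_ball by blast
    ultimately show ?thesis
      using that sub \<open>q \<in> F\<close> by blast
  qed
  show ?thesis
  proof (rule that[OF \<open>0 < R\<close> \<open>1 \<le> K0\<close> \<open>0 < \<kappa>0\<close> \<open>\<kappa>0 \<le> 1\<close>]; intro ballI allI impI)
    fix a b assume "a \<in> \<Omega>" "b \<in> \<Omega>" "dist a b < R"
    then obtain q where q: "q \<in> F" "a \<in> \<Omega> \<inter> ball q (\<eta> q)" "b \<in> \<Omega> \<inter> ball q (\<eta> q)"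
      using cover[of a] by (auto simp: subset_eq)
    then have "short_path_in \<Omega> (K q) a b"
      using F(1) by (intro local_paths) auto
    then show "short_path_in \<Omega> K0 a b"
      using bounds(3)[OF q(1)] by (rule short_path_in_mono)
  next
    fix a \<rho> assume "a \<in> \<Omega>" and \<rho>: "0 < \<rho> \<and> \<rho> \<le> R"
    then obtain q where q: "q \<in> F" "a \<in> \<Omega> \<inter> ball q (\<eta> q)"
      using cover[of a] by auto
    then have "nearby_ball_in \<Omega> (\<kappa> q) a \<rho>"
      using F(1) bounds(2)[OF q(1)] \<rho> by (intro local_balls) auto
    then show "nearby_ball_in \<Omega> \<kappa>0 a \<rho>"
      using bounds(4)[OF q(1)] by (rule nearby_ball_in_mono) (use \<rho> in simp)
  qed
qed

section \<open>Admissible deformations are injective at a fixed scale\<close>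

lemma holder_norm_bound:
  fixes F :: "real^'n \<Rightarrow> real^'n^'n"
  assumes "bdd_above ((\<lambda>x. norm (F x)) ` S)" and "bdd_above (holder_quotients \<alpha> S F)"
    and "holder_norm \<alpha> S F \<le> M" and "x \<in> S" and "z \<in> S"
  shows "norm (F x - F z) \<le> M * dist x z powr \<alpha>"
proof (cases "x = z")
  case False
  have "0 \<le> sup_norm_on S F"
    unfolding sup_norm_on_def using assms(1,4) by (meson cSUP_upper2 norm_ge_zero)
  then have "holder_seminorm \<alpha> S F \<le> M"
    using assms(3) unfolding holder_norm_def by linarith
  moreover have "norm (F x - F z) / dist x z powr \<alpha> \<le> holder_seminorm \<alpha> S F"
    using assms(2,4,5) False unfolding holder_seminorm_def holder_quotients_def
    by (intro cSup_upper) auto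
  ultimately have "norm (F x - F z) / dist x z powr \<alpha> \<le> M"
    by linarith
  then show ?thesis
    using False by (simp add: divide_le_eq)
qed simp

definition admissible_deformation ::
  "real \<Rightarrow> real \<Rightarrow> real \<Rightarrow> real \<Rightarrow> (real^'n) set \<Rightarrow> (real^'n \<Rightarrow> real^'n) \<Rightarrow> (real^'n \<Rightarrow> real^'n^'n) \<Rightarrow> bool"
  where
  "admissible_deformation \<alpha> \<delta> M1 M2 \<Omega> y Dy \<longleftrightarrow>
     (\<forall>x\<in>\<Omega>. (y has_derivative (\<lambda>v. Dy x *v v)) (at x) \<and> \<delta> \<le> det (Dy x) \<and> norm (Dy x) \<le> M1) \<and>
     (\<forall>x\<in>\<Omega>. \<forall>z\<in>\<Omega>. norm (Dy x - Dy z) \<le> M2 * dist x z powr \<alpha>)"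

lemma admissible_deformationI:
  assumes "C1alpha \<alpha> \<Omega> y Dy" and "\<forall>x\<in>\<Omega>. \<delta> \<le> det (Dy x) \<and> norm (Dy x) \<le> M1"
    and "holder_norm \<alpha> \<Omega> Dy \<le> M2"
  shows "admissible_deformation \<alpha> \<delta> M1 M2 \<Omega> y Dy"
  using assms holder_norm_bound[of Dy \<Omega> \<alpha> M2]
  unfolding admissible_deformation_def C1alpha_def by blast

lemma admissible_lipschitz_on_segment:
  assumes "admissible_deformation \<alpha> \<delta> M1 M2 \<Omega> y Dy" and "closed_segment u v \<subseteq> \<Omega>"
  shows "dist (y u) (y v) \<le> M1 * dist u v"
proof -
  have "norm (y u - y v) \<le> M1 * norm (u - v)"
  proof (rule differentiable_bound[where f' = "\<lambda>x. (*v) (Dy x)"])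
    fix x assume "x \<in> closed_segment u v"
    then have "x \<in> \<Omega>"
      using assms(2) by blast
    then show "(y has_derivative (*v) (Dy x)) (at x within closed_segment u v)"
      using assms(1) unfolding admissible_deformation_def by (blast intro: has_derivative_at_withinI)
    show "onorm ((*v) (Dy x)) \<le> M1"
      using \<open>x \<in> \<Omega>\<close> assms(1) onorm_matrix_vector_mult_le[of "Dy x"]
      unfolding admissible_deformation_def by (meson order_trans)
  qed auto
  then show ?thesis
    by (simp add: dist_norm)
qed

lemma admissible_linearization_on_segment:
  assumes "admissible_deformation \<alpha> \<delta> M1 M2 \<Omega> y Dy" and "0 \<le> \<alpha>" and "0 \<le> M2" and "a \<in> \<Omega>"
    and "closed_segment u v \<subseteq> \<Omega> \<inter> cball a T"
  shows "norm ((y u - Dy a *v u) - (y v - Dy a *v v)) \<le> M2 * T powr \<alpha> * dist u v"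
proof -
  have "norm ((y u - Dy a *v u) - (y v - Dy a *v v)) \<le> M2 * T powr \<alpha> * norm (u - v)"
  proof (rule differentiable_bound[where f' = "\<lambda>x. (*v) (Dy x - Dy a)"])
    fix x assume "x \<in> closed_segment u v"
    then have x: "x \<in> \<Omega>" "dist a x \<le> T"
      using assms(5) by auto
    have "(y has_derivative (*v) (Dy x)) (at x)"
      using x(1) assms(1) unfolding admissible_deformation_def by blast
    then have "((\<lambda>x. y x - Dy a *v x) has_derivative (\<lambda>h. Dy x *v h - Dy a *v h)) (at x)"
      by (intro derivative_intros bounded_linear_imp_has_derivative) auto
    moreover have "(\<lambda>h. Dy x *v h - Dy a *v h) = (*v) (Dy x - Dy a)"
      by (simp add: fun_eq_iff matrix_vector_mult_diff_rdistrib)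
    ultimately show "((\<lambda>x. y x - Dy a *v x) has_derivative (*v) (Dy x - Dy a)) (at x within closed_segment u v)"
      by (simp add: has_derivative_at_withinI)
    have "onorm ((*v) (Dy x - Dy a)) \<le> M2 * dist x a powr \<alpha>"
      using x(1) assms(1,4) onorm_matrix_vector_mult_le[of "Dy x - Dy a"]
      unfolding admissible_deformation_def by (meson order_trans)
    also have "\<dots> \<le> M2 * T powr \<alpha>"
      using x(2) assms(2,3) by (intro mult_left_mono powr_mono2) (auto simp: dist_commute)
    finally show "onorm ((*v) (Dy x - Dy a)) \<le> M2 * T powr \<alpha>" .
  qed auto
  then show ?thesis
    by (simp add: dist_norm)
qed

lemma admissible_injective_on_short_path:
  assumes adm: "admissible_deformation \<alpha> \<delta> M1 M2 \<Omega> y Dy" and "0 \<le> \<alpha>" and "0 \<le> M2"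
    and path: "short_path_in \<Omega> K a b" and "a \<in> \<Omega>"
    and lower: "\<And>v. c * norm v \<le> norm (Dy a *v v)"
    and small: "M2 * K * (K * dist a b) powr \<alpha> < c" and "y a = y b"
  shows "a = b"
proof (rule ccontr)
  assume "a \<noteq> b"
  define T where "T = K * dist a b"
  have "norm ((y a - Dy a *v a) - (y b - Dy a *v b)) \<le> M2 * T powr \<alpha> * K * dist a b"
    unfolding T_def
  proof (rule short_path_in_bound[OF short_path_in_cball[OF path], where f = "\<lambda>x. y x - Dy a *v x"])
    show "0 \<le> M2 * (K * dist a b) powr \<alpha>"
      using \<open>0 \<le> M2\<close> by simp
  qed (rule admissible_linearization_on_segment[OF adm \<open>0 \<le> \<alpha>\<close> \<open>0 \<le> M2\<close> \<open>a \<in> \<Omega>\<close>])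
  moreover have "(y a - Dy a *v a) - (y b - Dy a *v b) = Dy a *v (b - a)"
    using \<open>y a = y b\<close> by (simp add: matrix_vector_mult_diff_distrib)
  moreover have "c * dist a b \<le> norm (Dy a *v (b - a))"
    using lower[of "b - a"] by (simp add: dist_norm norm_minus_commute)
  ultimately have "c * dist a b \<le> (M2 * K * T powr \<alpha>) * dist a b"
    by (simp add: algebra_simps)
  then have "c \<le> M2 * K * T powr \<alpha>"
    using \<open>a \<noteq> b\<close> by simp
  with small show False
    unfolding T_def by simp
qed

lemma admissible_collisions_separated:
  fixes \<Omega> :: "(real^'n) set"
  assumes paths: "\<forall>a\<in>\<Omega>. \<forall>b\<in>\<Omega>. dist a b < R \<longrightarrow> short_path_in \<Omega> K a b"
    and "0 < R" and "0 < K" and "0 < \<alpha>" and "0 < \<delta>" and "0 < M2"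
  obtains r where "0 < r"
    and "\<And>y Dy a b. admissible_deformation \<alpha> \<delta> M1 M2 \<Omega> y Dy \<Longrightarrow> a \<in> \<Omega> \<Longrightarrow> b \<in> \<Omega> \<Longrightarrow>
           y a = y b \<Longrightarrow> a \<noteq> b \<Longrightarrow> r \<le> dist a b"
proof -
  obtain c where "0 < c" and lower: "\<And>(A :: real^'n^'n) v. \<delta> \<le> det A \<Longrightarrow> norm A \<le> M1 \<Longrightarrow> c * norm v \<le> norm (A *v v)"
    using det_ge_norm_le_bounded_below[OF \<open>0 < \<delta>\<close>] by blast
  define s where "s = (c / (2 * M2 * K)) powr (1 / \<alpha>) / K"
  have "0 < s"
    unfolding s_def using \<open>0 < c\<close> \<open>0 < M2\<close> \<open>0 < K\<close> by simp
  have "K * s = (c / (2 * M2 * K)) powr (1 / \<alpha>)"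
    unfolding s_def using \<open>0 < K\<close> by simp
  then have "(K * s) powr \<alpha> = c / (2 * M2 * K)"
    using \<open>0 < c\<close> \<open>0 < M2\<close> \<open>0 < K\<close> \<open>0 < \<alpha>\<close> by (simp add: powr_powr)
  then have Ks: "M2 * K * (K * s) powr \<alpha> = c / 2"
    using \<open>0 < M2\<close> \<open>0 < K\<close> by simp
  show ?thesis
  proof (rule that[of "min R s"])
    show "0 < min R s"
      using \<open>0 < R\<close> \<open>0 < s\<close> by simp
    fix y Dy a b
    assume adm: "admissible_deformation \<alpha> \<delta> M1 M2 \<Omega> y Dy" and ab: "a \<in> \<Omega>" "b \<in> \<Omega>" "y a = y b" "a \<noteq> b"
    show "min R s \<le> dist a b"
    proof (rule ccontr)
      assume "\<not> min R s \<le> dist a b"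
      then have "dist a b < R" "dist a b < s"
        by auto
      have "(K * dist a b) powr \<alpha> \<le> (K * s) powr \<alpha>"
        using \<open>dist a b < s\<close> \<open>0 < K\<close> \<open>0 < \<alpha>\<close> by (intro powr_mono2) auto
      then have "M2 * K * (K * dist a b) powr \<alpha> \<le> M2 * K * (K * s) powr \<alpha>"
        using \<open>0 < M2\<close> \<open>0 < K\<close> by (intro mult_left_mono) auto
      then have small: "M2 * K * (K * dist a b) powr \<alpha> < c"
        using Ks \<open>0 < c\<close> by linarith
      have "\<delta> \<le> det (Dy a)" "norm (Dy a) \<le> M1"
        using adm ab(1) unfolding admissible_deformation_def by auto
      then have "\<And>v. c * norm v \<le> norm (Dy a *v v)"
        by (rule lower)
      with adm have "a = b"
        using paths ab \<open>dist a b < R\<close> small \<open>0 < \<alpha>\<close> \<open>0 < M2\<close>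
        by (intro admissible_injective_on_short_path[of \<alpha> \<delta> M1 M2 \<Omega> y Dy K a b c]) auto
      with \<open>a \<noteq> b\<close> show False ..
    qed
  qed
qed

section \<open>Energy of a collision\<close>

lemma E_CN_ge_ball:
  fixes \<Omega> :: "(real^'n) set" and c :: "(real^'n) \<times> (real^'n)"
  assumes "0 < \<epsilon>" and "0 \<le> G" and "0 < \<rho>"
    and ball: "\<And>w. w \<in> ball c \<rho> \<Longrightarrow>
      w \<in> \<Omega> \<times> \<Omega> \<and> G \<le> g (dist (snd w) (fst w)) - g (dist (y (snd w)) (y (fst w)) / \<epsilon>)"
  shows "ennreal (G * unit_ball_vol (2 * CARD('n)) * \<rho> ^ (2 * CARD('n)) / (\<epsilon> powr \<beta> * \<epsilon> ^ CARD('n)))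
    \<le> E_CN g \<beta> \<Omega> \<epsilon> y"
proof -
  define F where "F w = indicator (\<Omega> \<times> \<Omega>) w *
    ennreal ((1 / \<epsilon> ^ CARD('n)) * max 0 (g (dist (snd w) (fst w)) - g (dist (y (snd w)) (y (fst w)) / \<epsilon>)))"
    for w :: "(real^'n) \<times> (real^'n)"
  define q where "q = G / \<epsilon> ^ CARD('n)"
  define V where "V = unit_ball_vol (2 * CARD('n)) * \<rho> ^ (2 * CARD('n))"
  have "0 \<le> q" "0 \<le> V"
    unfolding q_def V_def using assms(1-3) by simp_all
  have "ennreal q * indicator (ball c \<rho>) w \<le> F w" for w
  proof (cases "w \<in> ball c \<rho>")
    case True
    then have "G \<le> max 0 (g (dist (snd w) (fst w)) - g (dist (y (snd w)) (y (fst w)) / \<epsilon>))"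
      using ball by fastforce
    then have "q \<le> (1 / \<epsilon> ^ CARD('n)) * max 0 (g (dist (snd w) (fst w)) - g (dist (y (snd w)) (y (fst w)) / \<epsilon>))"
      using \<open>0 < \<epsilon>\<close> unfolding q_def by (simp add: divide_right_mono)
    with True ball show ?thesis
      unfolding F_def by (simp add: ennreal_leI)
  qed (simp add: F_def)
  then have mono: "(\<integral>\<^sup>+ w. ennreal q * indicator (ball c \<rho>) w \<partial>lborel) \<le> (\<integral>\<^sup>+ w. F w \<partial>lborel)"
    by (rule nn_integral_mono)
  have "emeasure lborel (ball c \<rho>)
      = ennreal (unit_ball_vol (DIM((real^'n) \<times> (real^'n))) * \<rho> ^ DIM((real^'n) \<times> (real^'n)))"
    by (rule emeasure_ball) (use \<open>0 < \<rho>\<close> in simp)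
  moreover have "DIM((real^'n) \<times> (real^'n)) = 2 * CARD('n)"
    by simp
  ultimately have "emeasure lborel (ball c \<rho>) = ennreal V"
    unfolding V_def by (simp only:)
  then have "(\<integral>\<^sup>+ w. ennreal q * indicator (ball c \<rho>) w \<partial>lborel) = ennreal (q * V)"
    using \<open>0 \<le> q\<close> \<open>0 \<le> V\<close> by (simp add: nn_integral_cmult_indicator ennreal_mult)
  with mono have "ennreal (1 / \<epsilon> powr \<beta>) * ennreal (q * V) \<le> E_CN g \<beta> \<Omega> \<epsilon> y"
    unfolding E_CN_def F_def by (intro mult_left_mono) simp_all
  moreover have "1 / \<epsilon> powr \<beta> * (q * V)
      = G * unit_ball_vol (2 * CARD('n)) * \<rho> ^ (2 * CARD('n)) / (\<epsilon> powr \<beta> * \<epsilon> ^ CARD('n))"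
    unfolding q_def V_def by simp
  ultimately show ?thesis
    using \<open>0 \<le> q\<close> \<open>0 \<le> V\<close> ennreal_mult[of "1 / \<epsilon> powr \<beta>" "q * V"] by simp
qed

lemma nearby_ball_in_image_close:
  assumes "nearby_ball_in \<Omega> \<kappa> a \<rho>" and "\<kappa> \<le> 1" and "0 \<le> L"
    and lip: "\<forall>u v. closed_segment u v \<subseteq> \<Omega> \<longrightarrow> dist (y u) (y v) \<le> L * dist u v"
  shows "\<exists>c. ball c (\<kappa> * \<rho>) \<subseteq> \<Omega> \<and>
    (\<forall>x\<in>ball c (\<kappa> * \<rho>). dist a x \<le> 2 * \<rho> \<and> dist (y a) (y x) \<le> 2 * L * \<rho>)"
proof -
  obtain c where seg: "closed_segment a c \<subseteq> \<Omega>" and "dist a c \<le> \<rho>" and ball: "ball c (\<kappa> * \<rho>) \<subseteq> \<Omega>"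
    using assms(1) unfolding nearby_ball_in_def by blast
  have "dist a x \<le> 2 * \<rho> \<and> dist (y a) (y x) \<le> 2 * L * \<rho>" if x: "x \<in> ball c (\<kappa> * \<rho>)" for x
  proof -
    have "dist c x < \<kappa> * \<rho>"
      using x by simp
    then have "0 < \<kappa> * \<rho>"
      by (metis zero_le_dist le_less_trans)
    then have "closed_segment c x \<subseteq> ball c (\<kappa> * \<rho>)"
      using x by (intro closed_segment_subset convex_ball) auto
    then have "dist (y c) (y x) \<le> L * dist c x"
      using ball lip by blast
    moreover have "0 \<le> \<rho>"
      using \<open>dist a c \<le> \<rho>\<close> by (metis zero_le_dist order_trans)
    then have "dist c x \<le> \<rho>"
      using \<open>dist c x < \<kappa> * \<rho>\<close> \<open>\<kappa> \<le> 1\<close> mult_right_mono[of \<kappa> 1 \<rho>] by simp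
    moreover have "dist (y a) (y c) \<le> L * dist a c"
      using seg lip by blast
    ultimately show ?thesis
      using \<open>dist a c \<le> \<rho>\<close> \<open>0 \<le> L\<close> dist_triangle[of a x c] dist_triangle[of "y a" "y x" "y c"]
        mult_left_mono[of "dist c x" \<rho> L] mult_left_mono[of "dist a c" \<rho> L] by linarith
  qed
  with ball show ?thesis
    by blast
qed

lemma collision_product_ball:
  assumes "nearby_ball_in \<Omega> \<kappa> a \<rho>" and "nearby_ball_in \<Omega> \<kappa> b \<rho>" and "\<kappa> \<le> 1" and "0 \<le> L"
    and lip: "\<forall>u v. closed_segment u v \<subseteq> \<Omega> \<longrightarrow> dist (y u) (y v) \<le> L * dist u v"
    and "y a = y b"
  shows "\<exists>c. \<forall>w\<in>ball c (\<kappa> * \<rho>). w \<in> \<Omega> \<times> \<Omega> \<and> dist a b - 4 * \<rho> \<le> dist (snd w) (fst w) \<and>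
           dist (y (snd w)) (y (fst w)) \<le> 4 * L * \<rho>"
proof -
  obtain ca where ca: "ball ca (\<kappa> * \<rho>) \<subseteq> \<Omega>"
    "\<forall>x\<in>ball ca (\<kappa> * \<rho>). dist a x \<le> 2 * \<rho> \<and> dist (y a) (y x) \<le> 2 * L * \<rho>"
    using nearby_ball_in_image_close[OF assms(1,3,4) lip] by blast
  obtain cb where cb: "ball cb (\<kappa> * \<rho>) \<subseteq> \<Omega>"
    "\<forall>x\<in>ball cb (\<kappa> * \<rho>). dist b x \<le> 2 * \<rho> \<and> dist (y b) (y x) \<le> 2 * L * \<rho>"
    using nearby_ball_in_image_close[OF assms(2,3,4) lip] by blast
  have "w \<in> \<Omega> \<times> \<Omega> \<and> dist a b - 4 * \<rho> \<le> dist (snd w) (fst w) \<and> dist (y (snd w)) (y (fst w)) \<le> 4 * L * \<rho>"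
    if "w \<in> ball (ca, cb) (\<kappa> * \<rho>)" for w
  proof -
    have "fst w \<in> ball ca (\<kappa> * \<rho>)" "snd w \<in> ball cb (\<kappa> * \<rho>)"
      using that dist_fst_le[of "(ca, cb)" w] dist_snd_le[of "(ca, cb)" w] by auto
    then have "w \<in> \<Omega> \<times> \<Omega>" and near: "dist a (fst w) \<le> 2 * \<rho>" "dist (y a) (y (fst w)) \<le> 2 * L * \<rho>"
      "dist b (snd w) \<le> 2 * \<rho>" "dist (y b) (y (snd w)) \<le> 2 * L * \<rho>"
      using ca cb by (auto simp: mem_Times_iff)
    moreover have "dist a b \<le> dist a (fst w) + dist (fst w) (snd w) + dist b (snd w)"
      using dist_triangle[of a b "fst w"] dist_triangle[of "fst w" b "snd w"] by (simp add: dist_commute)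
    moreover have "dist (y (snd w)) (y (fst w)) \<le> dist (y b) (y (snd w)) + dist (y a) (y (fst w))"
      using dist_triangle[of "y (snd w)" "y (fst w)" "y b"] \<open>y a = y b\<close> by (simp add: dist_commute)
    ultimately show ?thesis
      by (simp add: dist_commute)
  qed
  then show ?thesis
    by blast
qed

lemma continuous_on_nonneg_small_near_0:
  fixes g :: "real \<Rightarrow> real"
  assumes "continuous_on {0..} g" and "g 0 = 0" and "0 < e"
  obtains t where "0 < t" and "\<And>s. 0 \<le> s \<Longrightarrow> s \<le> t \<Longrightarrow> g s < e"
proof -
  obtain d where "0 < d" and d: "\<And>s. s \<in> {0..} \<Longrightarrow> dist s 0 < d \<Longrightarrow> dist (g s) (g 0) < e"
    using assms(1,3) unfolding continuous_on_iff by (metis atLeast_iff order_refl)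
  show ?thesis
  proof (rule that[of "d / 2"])
    fix s :: real assume "0 \<le> s" "s \<le> d / 2"
    then have "\<bar>g s\<bar> < e"
      using d[of s] assms(2) \<open>0 < d\<close> by (simp add: dist_real_def)
    then show "g s < e"
      by simp
  qed (use \<open>0 < d\<close> in simp)
qed

lemma collision_energy_at_scale:
  fixes \<Omega> :: "(real^'n) set" and g :: "real \<Rightarrow> real"
  assumes "nearby_ball_in \<Omega> \<kappa> a \<rho>" and "nearby_ball_in \<Omega> \<kappa> b \<rho>"
    and "0 < \<kappa>" and "\<kappa> \<le> 1" and "0 < \<rho>" and "0 \<le> L" and "0 < \<epsilon>" and "0 < G"
    and lip: "\<forall>u v. closed_segment u v \<subseteq> \<Omega> \<longrightarrow> dist (y u) (y v) \<le> L * dist u v" and "y a = y b"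
    and far: "\<forall>s. dist a b - 4 * \<rho> \<le> s \<longrightarrow> G \<le> g s"
    and near: "\<forall>s. 0 \<le> s \<and> s \<le> 4 * L * \<rho> / \<epsilon> \<longrightarrow> g s < G / 2"
  shows "ennreal (G / 2 * unit_ball_vol (2 * CARD('n)) * (\<kappa> * \<rho>) ^ (2 * CARD('n))
           / (\<epsilon> powr \<beta> * \<epsilon> ^ CARD('n))) \<le> E_CN g \<beta> \<Omega> \<epsilon> y"
proof -
  obtain c where c: "\<forall>w\<in>ball c (\<kappa> * \<rho>). w \<in> \<Omega> \<times> \<Omega> \<and> dist a b - 4 * \<rho> \<le> dist (snd w) (fst w) \<and>
      dist (y (snd w)) (y (fst w)) \<le> 4 * L * \<rho>"
    using collision_product_ball[OF assms(1,2,4,6) lip \<open>y a = y b\<close>] by blast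
  have "w \<in> \<Omega> \<times> \<Omega> \<and> G / 2 \<le> g (dist (snd w) (fst w)) - g (dist (y (snd w)) (y (fst w)) / \<epsilon>)"
    if "w \<in> ball c (\<kappa> * \<rho>)" for w
  proof -
    have "w \<in> \<Omega> \<times> \<Omega>" "dist a b - 4 * \<rho> \<le> dist (snd w) (fst w)"
      "dist (y (snd w)) (y (fst w)) / \<epsilon> \<le> 4 * L * \<rho> / \<epsilon>"
      using c that \<open>0 < \<epsilon>\<close> by (auto simp: divide_right_mono)
    moreover have "0 \<le> dist (y (snd w)) (y (fst w)) / \<epsilon>"
      using \<open>0 < \<epsilon>\<close> by simp
    ultimately show ?thesis
      using far[rule_format, of "dist (snd w) (fst w)"] near[rule_format, of "dist (y (snd w)) (y (fst w)) / \<epsilon>"]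
      by simp
  qed
  then show ?thesis
    using assms(3,5,7,8) by (intro E_CN_ge_ball) auto
qed

lemma collision_energy_lower_bound:
  fixes \<Omega> :: "(real^'n) set" and g :: "real \<Rightarrow> real"
  assumes balls: "\<forall>a\<in>\<Omega>. \<forall>\<rho>. 0 < \<rho> \<and> \<rho> \<le> R \<longrightarrow> nearby_ball_in \<Omega> \<kappa> a \<rho>"
    and "0 < R" and "0 < \<kappa>" and "\<kappa> \<le> 1" and "0 < L" and "0 < r"
    and g: "continuous_on {0..} g" "strict_mono_on {0..} g" "g 0 = 0"
  obtains A \<epsilon>1 where "0 < A" and "0 < \<epsilon>1"
    and "\<And>\<epsilon> y a b. 0 < \<epsilon> \<Longrightarrow> \<epsilon> < \<epsilon>1 \<Longrightarrow>
           (\<forall>u v. closed_segment u v \<subseteq> \<Omega> \<longrightarrow> dist (y u) (y v) \<le> L * dist u v) \<Longrightarrow>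
           a \<in> \<Omega> \<Longrightarrow> b \<in> \<Omega> \<Longrightarrow> r \<le> dist a b \<Longrightarrow> y a = y b \<Longrightarrow>
           ennreal (A * \<epsilon> ^ CARD('n) / \<epsilon> powr \<beta>) \<le> E_CN g \<beta> \<Omega> \<epsilon> y"
proof -
  define G where "G = g (r / 2)"
  have "0 < G"
    unfolding G_def using strict_mono_onD[OF g(2), of 0 "r / 2"] g(3) \<open>0 < r\<close> by simp
  then obtain t where "0 < t" and t: "\<And>s. 0 \<le> s \<Longrightarrow> s \<le> t \<Longrightarrow> g s < G / 2"
    using continuous_on_nonneg_small_near_0[OF g(1,3), of "G / 2"] by auto
  define c where "c = \<kappa> * t / (4 * L)"
  define A where "A = G / 2 * unit_ball_vol (2 * CARD('n)) * c ^ (2 * CARD('n))"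
  define \<epsilon>1 where "\<epsilon>1 = 4 * L * min R (r / 8) / t"
  show ?thesis
  proof (rule that)
    show "0 < A" "0 < \<epsilon>1"
      unfolding A_def c_def \<epsilon>1_def using \<open>0 < G\<close> \<open>0 < \<kappa>\<close> \<open>0 < t\<close> \<open>0 < L\<close> \<open>0 < R\<close> \<open>0 < r\<close> by simp_all
    fix \<epsilon> and y :: "real^'n \<Rightarrow> real^'n" and a b
    assume "0 < \<epsilon>" "\<epsilon> < \<epsilon>1"
      and lip: "\<forall>u v. closed_segment u v \<subseteq> \<Omega> \<longrightarrow> dist (y u) (y v) \<le> L * dist u v"
      and ab: "a \<in> \<Omega>" "b \<in> \<Omega>" "r \<le> dist a b" "y a = y b"
    define \<rho> where "\<rho> = \<epsilon> * t / (4 * L)"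
    have "\<rho> < \<epsilon>1 * t / (4 * L)"
      unfolding \<rho>_def using \<open>\<epsilon> < \<epsilon>1\<close> \<open>0 < t\<close> \<open>0 < L\<close> by (simp add: divide_strict_right_mono)
    also have "\<epsilon>1 * t / (4 * L) = min R (r / 8)"
      unfolding \<epsilon>1_def using \<open>0 < t\<close> \<open>0 < L\<close> by simp
    finally have "0 < \<rho>" "\<rho> \<le> R" "\<rho> \<le> r / 8"
      unfolding \<rho>_def using \<open>0 < \<epsilon>\<close> \<open>0 < t\<close> \<open>0 < L\<close> by simp_all
    have "r / 2 \<le> s \<Longrightarrow> G \<le> g s" for s
      unfolding G_def using \<open>0 < r\<close> by (intro strict_mono_on_leD[OF g(2)]) auto
    then have far: "\<forall>s. dist a b - 4 * \<rho> \<le> s \<longrightarrow> G \<le> g s"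
      using ab(3) \<open>\<rho> \<le> r / 8\<close> by force
    have "4 * L * \<rho> / \<epsilon> = t"
      unfolding \<rho>_def using \<open>0 < \<epsilon>\<close> \<open>0 < L\<close> by simp
    then have near: "\<forall>s. 0 \<le> s \<and> s \<le> 4 * L * \<rho> / \<epsilon> \<longrightarrow> g s < G / 2"
      using t by simp
    have "nearby_ball_in \<Omega> \<kappa> a \<rho>" "nearby_ball_in \<Omega> \<kappa> b \<rho>"
      using balls ab(1,2) \<open>0 < \<rho>\<close> \<open>\<rho> \<le> R\<close> by blast+
    then have "ennreal (G / 2 * unit_ball_vol (2 * CARD('n)) * (\<kappa> * \<rho>) ^ (2 * CARD('n))
        / (\<epsilon> powr \<beta> * \<epsilon> ^ CARD('n))) \<le> E_CN g \<beta> \<Omega> \<epsilon> y"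
      by (rule collision_energy_at_scale[OF _ _ \<open>0 < \<kappa>\<close> \<open>\<kappa> \<le> 1\<close> \<open>0 < \<rho>\<close> less_imp_le[OF \<open>0 < L\<close>]
            \<open>0 < \<epsilon>\<close> \<open>0 < G\<close> lip ab(4) far near])
    moreover have "\<kappa> * \<rho> = c * \<epsilon>"
      unfolding c_def \<rho>_def by simp
    moreover have "\<epsilon> ^ (2 * CARD('n)) = \<epsilon> ^ CARD('n) * \<epsilon> ^ CARD('n)"
      by (metis mult_2 power_add)
    ultimately show "ennreal (A * \<epsilon> ^ CARD('n) / \<epsilon> powr \<beta>) \<le> E_CN g \<beta> \<Omega> \<epsilon> y"
      unfolding A_def using \<open>0 < \<epsilon>\<close> by (simp add: power_mult_distrib mult.assoc)
  qed
qed

lemma less_mult_power_divide_powr: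
  fixes A C \<beta> \<epsilon> :: real
  assumes "0 < A" and "0 < C" and "real n < \<beta>" and "0 < \<epsilon>"
    and "\<epsilon> < (A / C) powr (1 / (\<beta> - n))"
  shows "C < A * \<epsilon> ^ n / \<epsilon> powr \<beta>"
proof -
  have "\<epsilon> powr (\<beta> - n) < ((A / C) powr (1 / (\<beta> - n))) powr (\<beta> - n)"
    using assms by (intro powr_less_mono2) auto
  also have "\<dots> = A / C"
    using assms by (simp add: powr_powr)
  finally have "C * \<epsilon> powr (\<beta> - n) < A"
    using \<open>0 < C\<close> by (simp add: pos_less_divide_eq mult.commute)
  moreover have "\<epsilon> powr \<beta> = \<epsilon> powr (\<beta> - n) * \<epsilon> ^ n"
    using \<open>0 < \<epsilon>\<close> by (simp add: powr_realpow[symmetric] powr_add[symmetric])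
  ultimately show ?thesis
    using \<open>0 < \<epsilon>\<close> by (simp add: pos_less_divide_eq mult.assoc)
qed

lemma non_injective_energy_lower_bound:
  fixes \<Omega> :: "(real^'n) set" and g :: "real \<Rightarrow> real"
  assumes "lipschitz_domain \<Omega>"
    and g: "continuous_on {0..} g" "strict_mono_on {0..} g" "g 0 = 0"
    and "0 < \<alpha>" and "0 < \<delta>" and "0 < M1" and "0 < M2"
  obtains A \<epsilon>1 where "0 < A" and "0 < \<epsilon>1"
    and "\<And>\<epsilon> y Dy. 0 < \<epsilon> \<Longrightarrow> \<epsilon> < \<epsilon>1 \<Longrightarrow> admissible_deformation \<alpha> \<delta> M1 M2 \<Omega> y Dy \<Longrightarrow>
           \<not> inj_on y \<Omega> \<Longrightarrow> ennreal (A * \<epsilon> ^ CARD('n) / \<epsilon> powr \<beta>) \<le> E_CN g \<beta> \<Omega> \<epsilon> y"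
proof -
  obtain R K \<kappa> where "0 < R" "1 \<le> K" "0 < \<kappa>" "\<kappa> \<le> 1"
    and paths: "\<forall>a\<in>\<Omega>. \<forall>b\<in>\<Omega>. dist a b < R \<longrightarrow> short_path_in \<Omega> K a b"
    and balls: "\<forall>a\<in>\<Omega>. \<forall>\<rho>. 0 < \<rho> \<and> \<rho> \<le> R \<longrightarrow> nearby_ball_in \<Omega> \<kappa> a \<rho>"
    by (rule lipschitz_domain_uniform_geometry[OF assms(1)]) (rule that)
  have "0 < K"
    using \<open>1 \<le> K\<close> by simp
  obtain r where "0 < r" and separated: "\<And>y Dy a b. admissible_deformation \<alpha> \<delta> M1 M2 \<Omega> y Dy \<Longrightarrow>
      a \<in> \<Omega> \<Longrightarrow> b \<in> \<Omega> \<Longrightarrow> y a = y b \<Longrightarrow> a \<noteq> b \<Longrightarrow> r \<le> dist a b"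
    by (rule admissible_collisions_separated[OF paths \<open>0 < R\<close> \<open>0 < K\<close> assms(5,6,8)]) (rule that)
  obtain A \<epsilon>1 where "0 < A" "0 < \<epsilon>1" and energy: "\<And>\<epsilon> y a b. 0 < \<epsilon> \<Longrightarrow> \<epsilon> < \<epsilon>1 \<Longrightarrow>
      (\<forall>u v. closed_segment u v \<subseteq> \<Omega> \<longrightarrow> dist (y u) (y v) \<le> M1 * dist u v) \<Longrightarrow>
      a \<in> \<Omega> \<Longrightarrow> b \<in> \<Omega> \<Longrightarrow> r \<le> dist a b \<Longrightarrow> y a = y b \<Longrightarrow>
      ennreal (A * \<epsilon> ^ CARD('n) / \<epsilon> powr \<beta>) \<le> E_CN g \<beta> \<Omega> \<epsilon> y"
    by (rule collision_energy_lower_bound[OF balls \<open>0 < R\<close> \<open>0 < \<kappa>\<close> \<open>\<kappa> \<le> 1\<close> assms(7) \<open>0 < r\<close> g])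
      (rule that)
  show ?thesis
  proof (rule that[OF \<open>0 < A\<close> \<open>0 < \<epsilon>1\<close>])
    fix \<epsilon> y Dy
    assume "0 < \<epsilon>" "\<epsilon> < \<epsilon>1" and adm: "admissible_deformation \<alpha> \<delta> M1 M2 \<Omega> y Dy" and "\<not> inj_on y \<Omega>"
    then obtain a b where ab: "a \<in> \<Omega>" "b \<in> \<Omega>" "y a = y b" "a \<noteq> b"
      unfolding inj_on_def by blast
    have lip: "\<forall>u v. closed_segment u v \<subseteq> \<Omega> \<longrightarrow> dist (y u) (y v) \<le> M1 * dist u v"
      using admissible_lipschitz_on_segment[OF adm] by blast
    show "ennreal (A * \<epsilon> ^ CARD('n) / \<epsilon> powr \<beta>) \<le> E_CN g \<beta> \<Omega> \<epsilon> y"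
      by (rule energy[OF \<open>0 < \<epsilon>\<close> \<open>\<epsilon> < \<epsilon>1\<close> lip ab(1,2) separated[OF adm ab] ab(3)])
  qed
qed

theorem corollary3p8:
  fixes \<Omega> :: "(real^'n) set" and g :: "real \<Rightarrow> real"
    and \<alpha> \<delta> M1 M2 C \<beta> :: real
  assumes "lipschitz_domain \<Omega>"
    and "continuous_on {0..} g" and "strict_mono_on {0..} g" and "g 0 = 0"
    and "g ` {0..} \<subseteq> {0..}"
    and "0 < \<alpha>" and "\<alpha> \<le> 1" and "\<delta> > 0" and "M1 > 0" and "M2 > 0" and "C > 0"
    and "\<beta> > real CARD('n)"
  shows "\<exists>\<epsilon>t > 0. \<forall>\<epsilon>2 y Dy. 0 < \<epsilon>2 \<and> \<epsilon>2 < \<epsilon>t \<and> C1alpha \<alpha> \<Omega> y Dy \<and>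
            (\<forall>x \<in> \<Omega>. det (Dy x) \<ge> \<delta> \<and> norm (Dy x) \<le> M1) \<and>
            holder_norm \<alpha> \<Omega> Dy \<le> M2 \<and>
            E_CN g \<beta> \<Omega> \<epsilon>2 y \<le> ennreal C
          \<longrightarrow> inj_on y \<Omega>"
proof -
  obtain A \<epsilon>1 where "0 < A" "0 < \<epsilon>1" and energy: "\<And>\<epsilon> y Dy. 0 < \<epsilon> \<Longrightarrow> \<epsilon> < \<epsilon>1 \<Longrightarrow>
      admissible_deformation \<alpha> \<delta> M1 M2 \<Omega> y Dy \<Longrightarrow> \<not> inj_on y \<Omega> \<Longrightarrow>
      ennreal (A * \<epsilon> ^ CARD('n) / \<epsilon> powr \<beta>) \<le> E_CN g \<beta> \<Omega> \<epsilon> y"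
    by (rule non_injective_energy_lower_bound[OF assms(1-4,6,8-10)]) (rule that)
  define \<epsilon>t where "\<epsilon>t = min \<epsilon>1 ((A / C) powr (1 / (\<beta> - CARD('n))))"
  show ?thesis
  proof (intro exI[of _ \<epsilon>t] conjI allI impI)
    show "0 < \<epsilon>t"
      unfolding \<epsilon>t_def using \<open>0 < \<epsilon>1\<close> \<open>0 < A\<close> \<open>0 < C\<close> by simp
    fix \<epsilon> y Dy
    assume "0 < \<epsilon> \<and> \<epsilon> < \<epsilon>t \<and> C1alpha \<alpha> \<Omega> y Dy \<and> (\<forall>x\<in>\<Omega>. \<delta> \<le> det (Dy x) \<and> norm (Dy x) \<le> M1) \<and>
      holder_norm \<alpha> \<Omega> Dy \<le> M2 \<and> E_CN g \<beta> \<Omega> \<epsilon> y \<le> ennreal C"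
    then have "0 < \<epsilon>" "\<epsilon> < \<epsilon>1" "\<epsilon> < (A / C) powr (1 / (\<beta> - CARD('n)))" "E_CN g \<beta> \<Omega> \<epsilon> y \<le> ennreal C"
      and adm: "admissible_deformation \<alpha> \<delta> M1 M2 \<Omega> y Dy"
      unfolding \<epsilon>t_def by (auto intro: admissible_deformationI)
    show "inj_on y \<Omega>"
    proof (rule ccontr)
      assume "\<not> inj_on y \<Omega>"
      with energy[OF \<open>0 < \<epsilon>\<close> \<open>\<epsilon> < \<epsilon>1\<close> adm] \<open>E_CN g \<beta> \<Omega> \<epsilon> y \<le> ennreal C\<close>
      have "ennreal (A * \<epsilon> ^ CARD('n) / \<epsilon> powr \<beta>) \<le> ennreal C"
        by (blast intro: order_trans)
      moreover have "C < A * \<epsilon> ^ CARD('n) / \<epsilon> powr \<beta>"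
        by (rule less_mult_power_divide_powr) (use \<open>0 < \<epsilon>\<close> \<open>0 < A\<close> assms(11,12) \<open>\<epsilon> < (A / C) powr _\<close> in auto)
      ultimately show False
        using \<open>0 < C\<close> by (simp add: ennreal_le_iff)
    qed
  qed
qed

end
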